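(* Let $C\subset\mathbb{R}^n$ be a pointed, $n$-dimensional closed convex cone. If $K_j$ ($j\in\mathbb{N}$) and $K$ are $C$-pseudo-cones with $K_j\to K$, then $\gamma^n(K_j)\to\gamma^n(K)$.
   Context: $C^{\circ}=\{x:\langle x,y\rangle\le 0\ \forall y\in C\}$. A pseudo-cone is a nonempty closed convex set $K$ with $o\notin K$ and $\lambda K\subseteq K$ for $\lambda\ge1$; it is a $C$-pseudo-cone if its recession cone $\{z:K+z\subseteq K\}$ equals $C$. $\gamma^n$ is the standard Gaussian probability measure on $\mathbb{R}^n$. Fix a unit vector $\mathfrak{v}\in\operatorname{int}C\cap\operatorname{int}(-C^{\circ})$ and for $t>0$ let $C^-(t)=C\cap\{x:\langle x,\mathfrak v\rangle\le t\}$, $K^-(t)=K\cap C^-(t)$. A sequence of $C$-pseudo-cones $K_j$ converges to a $C$-pseudo-cone $K$ if there is $t_0>0$ with $K_j^-(t_0)\neq\emptyset$ for all $j$ and $K_j^-(t)\to K^-(t)$ in the Hausdorff metric for all $t\ge t_0$. *)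

theory Defs
  imports "HOL-Analysis.Analysis"
begin

definition polar_cone :: "'a::euclidean_space set \<Rightarrow> 'a set" where
  "polar_cone C = {x. \<forall>y\<in>C. x \<bullet> y \<le> 0}"

definition pointed_cone :: "'a::euclidean_space set \<Rightarrow> bool" where
  "pointed_cone C \<longleftrightarrow> C \<inter> uminus ` C = {0}"

definition full_closed_convex_pointed_cone :: "'a::euclidean_space set \<Rightarrow> bool" where
  "full_closed_convex_pointed_cone C \<longleftrightarrow>
     closed C \<and> convex C \<and> cone C \<and> C \<noteq> {} \<and> pointed_cone C \<and> aff_dim C = int DIM('a)"

definition recession_cone :: "'a::euclidean_space set \<Rightarrow> 'a set" where
  "recession_cone K = {z. (\<lambda>x. x + z) ` K \<subseteq> K}"

definition pseudo_cone :: "'a::euclidean_space set \<Rightarrow> bool" where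
  "pseudo_cone K \<longleftrightarrow> K \<noteq> {} \<and> closed K \<and> convex K \<and> 0 \<notin> K \<and>
     (\<forall>l::real. l \<ge> 1 \<longrightarrow> (\<lambda>x. l *\<^sub>R x) ` K \<subseteq> K)"

definition C_pseudo_cone :: "'a::euclidean_space set \<Rightarrow> 'a set \<Rightarrow> bool" where
  "C_pseudo_cone C K \<longleftrightarrow> pseudo_cone K \<and> recession_cone K = C"

definition lower_part :: "'a::euclidean_space set \<Rightarrow> 'a \<Rightarrow> real \<Rightarrow> 'a set" where
  "lower_part C v t = C \<inter> {x. x \<bullet> v \<le> t}"

text \<open>Hausdorff distance (used on nonempty compact sets)\<close>
definition hausdorff_dist :: "'a::metric_space set \<Rightarrow> 'a set \<Rightarrow> real" where
  "hausdorff_dist A B = max (SUP a\<in>A. infdist a B) (SUP b\<in>B. infdist b A)"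

definition pc_converges ::
  "'a::euclidean_space set \<Rightarrow> 'a \<Rightarrow> (nat \<Rightarrow> 'a set) \<Rightarrow> 'a set \<Rightarrow> bool" where
  "pc_converges C v Ks K \<longleftrightarrow>
     (\<exists>t0>0. (\<forall>j. Ks j \<inter> lower_part C v t0 \<noteq> {}) \<and>
       (\<forall>t\<ge>t0. K \<inter> lower_part C v t \<noteq> {} \<and>
          (\<lambda>j. hausdorff_dist (Ks j \<inter> lower_part C v t) (K \<inter> lower_part C v t))
            \<longlonglongrightarrow> 0))"

definition gaussian :: "'a::euclidean_space measure" where
  "gaussian = density lborel
     (\<lambda>x. ennreal ((2 * pi) powr (- real DIM('a) / 2) * exp (- (norm x)\<^sup>2 / 2)))"

end

theory Submission
  imports Defs "HOL-Probability.Distributions"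
begin

(*
  A point outside the closed set K keeps a positive distance from the truncations
  K \<inter> C^-(t), so it eventually lies outside K\<^sub>j; a point x in the interior of K that
  lies outside a closed convex K\<^sub>j can be pushed away from a separating hyperplane to a point
  of K far from K\<^sub>j. Both contradict Hausdorff convergence of the truncations, which are
  bounded because v \<in> int(-C\<degree>). Hence the indicators of K\<^sub>j converge to that of K off
  the boundary of the convex set K, which is Lebesgue-null and thus Gaussian-null, and dominated
  convergence for the finite Gaussian measure gives the claim.
*)

lemma hausdorff_dist_commute: "hausdorff_dist A B = hausdorff_dist B A"
  unfolding hausdorff_dist_def by (rule max.commute)

lemma infdist_geI:
  assumes "A \<noteq> {}" "\<And>a. a \<in> A \<Longrightarrow> r \<le> dist x a"
  shows "r \<le> infdist x A"
  using assms by (simp add: infdist_notempty cINF_greatest)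

lemma infdist_le_hausdorff_dist:
  fixes A B :: "'a::metric_space set"
  assumes "bounded A" "B \<noteq> {}" "a \<in> A"
  shows "infdist a B \<le> hausdorff_dist A B"
proof -
  obtain b where b: "b \<in> B" using assms(2) by blast
  obtain e where e: "\<And>x. x \<in> A \<Longrightarrow> dist b x \<le> e"
    using assms(1) bounded_any_center by metis
  have "bdd_above ((\<lambda>x. infdist x B) ` A)"
  proof (rule bdd_aboveI2)
    fix x assume "x \<in> A"
    then show "infdist x B \<le> e"
      using infdist_le[OF b, of x] e[of x] by (simp add: dist_commute)
  qed
  then have "infdist a B \<le> (SUP x\<in>A. infdist x B)"
    using assms(3) by (rule cSUP_upper2) simp
  then show ?thesis unfolding hausdorff_dist_def by linarith
qed

lemma pseudo_cone_subset_recession_cone: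
  assumes "pseudo_cone K"
  shows "K \<subseteq> recession_cone K"
proof
  fix x assume x: "x \<in> K"
  have "y + x \<in> K" if y: "y \<in> K" for y
  proof -
    have "(1/2) *\<^sub>R y + (1/2) *\<^sub>R x \<in> K"
      using assms x y unfolding pseudo_cone_def by (intro convexD) auto
    moreover have "(\<lambda>x. 2 *\<^sub>R x) ` K \<subseteq> K"
      using assms unfolding pseudo_cone_def by simp
    ultimately have "2 *\<^sub>R ((1/2) *\<^sub>R y + (1/2) *\<^sub>R x) \<in> K" by blast
    then show ?thesis by (simp add: scaleR_add_right)
  qed
  then show "x \<in> recession_cone K" unfolding recession_cone_def by auto
qed

lemma C_pseudo_cone_subset: "C_pseudo_cone C K \<Longrightarrow> K \<subseteq> C"
  using pseudo_cone_subset_recession_cone unfolding C_pseudo_cone_def by blast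

lemma lower_part_mono: "s \<le> t \<Longrightarrow> lower_part C v s \<subseteq> lower_part C v t"
  by (auto simp: lower_part_def)

lemma bounded_lower_part:
  assumes "v \<in> interior (uminus ` polar_cone C)"
  shows "bounded (lower_part C v t)"
proof -
  obtain e where e: "e > 0" "ball v e \<subseteq> uminus ` polar_cone C"
    using assms by (meson open_contains_ball open_interior interior_subset subset_trans)
  have key: "(e/2) * norm y \<le> y \<bullet> v" if y: "y \<in> C" for y
  proof (cases "y = 0")
    case False
    define w where "w = v - ((e/2) / norm y) *\<^sub>R y"
    have "dist v w = e/2" using False e by (simp add: w_def dist_norm)
    then have "w \<in> uminus ` polar_cone C" using e by auto
    then have "0 \<le> w \<bullet> y" using y unfolding polar_cone_def by force
    also have "w \<bullet> y = v \<bullet> y - (e/2) * norm y"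
      using False
      by (simp add: w_def inner_diff_left power2_norm_eq_inner[symmetric] power2_eq_square)
    finally show ?thesis by (simp add: inner_commute)
  qed simp
  show ?thesis unfolding bounded_iff
  proof (intro exI ballI)
    fix x assume "x \<in> lower_part C v t"
    then have "(e/2) * norm x \<le> t" using key by (fastforce simp: lower_part_def)
    then show "norm x \<le> 2 * t / e" using e by (simp add: field_simps)
  qed
qed

lemma exists_point_far_from_closed_convex:
  fixes S :: "'a::euclidean_space set"
  assumes "closed S" "convex S" "S \<noteq> {}" "x \<notin> S" "r \<ge> 0"
  obtains z where "dist x z = r" "\<And>y. y \<in> S \<Longrightarrow> r < dist z y"
proof -
  obtain a b where ab: "a \<bullet> x < b" "\<And>y. y \<in> S \<Longrightarrow> b < a \<bullet> y"
    using separating_hyperplane_closed_point[OF assms(2,1,4)] by blast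
  have "a \<noteq> 0" using ab assms(3) by fastforce
  then have na: "norm a > 0" by simp
  define z where "z = x - (r / norm a) *\<^sub>R a"
  have "dist x z = r"
    using na assms(5) by (simp add: z_def dist_norm)
  moreover have "r < dist z y" if "y \<in> S" for y
  proof -
    have "a \<bullet> x < a \<bullet> y" using ab that by force
    then have "r * norm a < a \<bullet> (y - z)"
      using na
      by (simp add: z_def inner_diff_right power2_norm_eq_inner[symmetric] power2_eq_square)
    also have "\<dots> \<le> norm a * norm (y - z)"
      using Cauchy_Schwarz_ineq2[of a "y - z"] by linarith
    finally show ?thesis using na by (simp add: mult.commute dist_norm norm_minus_commute)
  qed
  ultimately show ?thesis using that by blast
qed

lemma pc_convergesE:
  assumes "pc_converges C v Ks K"
  obtains t0 where
    "\<And>t j. t \<ge> t0 \<Longrightarrow> Ks j \<inter> lower_part C v t \<noteq> {}"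
    "\<And>t. t \<ge> t0 \<Longrightarrow> K \<inter> lower_part C v t \<noteq> {}"
    "\<And>t e. t \<ge> t0 \<Longrightarrow> e > 0 \<Longrightarrow>
       eventually (\<lambda>j. hausdorff_dist (Ks j \<inter> lower_part C v t) (K \<inter> lower_part C v t) < e)
         sequentially"
proof -
  obtain t0 where t0: "\<And>j. Ks j \<inter> lower_part C v t0 \<noteq> {}"
    and conv: "\<And>t. t \<ge> t0 \<Longrightarrow> K \<inter> lower_part C v t \<noteq> {} \<and>
      (\<lambda>j. hausdorff_dist (Ks j \<inter> lower_part C v t) (K \<inter> lower_part C v t)) \<longlonglongrightarrow> 0"
    using assms unfolding pc_converges_def by blast
  show ?thesis
  proof
    show "Ks j \<inter> lower_part C v t \<noteq> {}" if "t \<ge> t0" for t j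
      using t0[of j] lower_part_mono[OF that] by blast
  qed (use conv in \<open>auto dest: order_tendstoD(2)\<close>)
qed

lemma pc_converges_eventually_notin:
  assumes "pc_converges C v Ks K" "\<And>t. bounded (lower_part C v t)" "\<And>j. Ks j \<subseteq> C"
    and "closed K" "x \<notin> K"
  shows "eventually (\<lambda>j. x \<notin> Ks j) sequentially"
proof -
  obtain t0 where "\<And>t j. t \<ge> t0 \<Longrightarrow> Ks j \<inter> lower_part C v t \<noteq> {}"
    and ne: "\<And>t. t \<ge> t0 \<Longrightarrow> K \<inter> lower_part C v t \<noteq> {}"
    and conv: "\<And>t e. t \<ge> t0 \<Longrightarrow> e > 0 \<Longrightarrow>
       eventually (\<lambda>j. hausdorff_dist (Ks j \<inter> lower_part C v t) (K \<inter> lower_part C v t) < e)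
         sequentially"
    using pc_convergesE[OF assms(1)] by blast
  define t where "t = max t0 (x \<bullet> v)"
  have t: "t \<ge> t0" by (simp add: t_def)
  have pos: "infdist x K > 0"
    using ne[OF t] assms(4,5) by (intro infdist_pos_not_in_closed) auto
  show ?thesis using conv[OF t pos]
  proof eventually_elim
    case (elim j)
    show "x \<notin> Ks j"
    proof
      assume "x \<in> Ks j"
      then have "x \<in> Ks j \<inter> lower_part C v t"
        using assms(3) by (auto simp: lower_part_def t_def)
      then have "infdist x (K \<inter> lower_part C v t)
          \<le> hausdorff_dist (Ks j \<inter> lower_part C v t) (K \<inter> lower_part C v t)"
        using assms(2) ne[OF t] by (intro infdist_le_hausdorff_dist) (auto intro: bounded_subset)
      moreover have "infdist x K \<le> infdist x (K \<inter> lower_part C v t)"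
        using ne[OF t] by (intro infdist_mono) auto
      ultimately show False using elim by linarith
    qed
  qed
qed

lemma pc_converges_eventually_in:
  assumes "pc_converges C v Ks K" "\<And>t. bounded (lower_part C v t)" "K \<subseteq> C"
    and "\<And>j. closed (Ks j)" "\<And>j. convex (Ks j)" "x \<in> interior K"
  shows "eventually (\<lambda>j. x \<in> Ks j) sequentially"
proof -
  obtain t0 where neKs: "\<And>t j. t \<ge> t0 \<Longrightarrow> Ks j \<inter> lower_part C v t \<noteq> {}"
    and "\<And>t. t \<ge> t0 \<Longrightarrow> K \<inter> lower_part C v t \<noteq> {}"
    and conv: "\<And>t e. t \<ge> t0 \<Longrightarrow> e > 0 \<Longrightarrow>
       eventually (\<lambda>j. hausdorff_dist (Ks j \<inter> lower_part C v t) (K \<inter> lower_part C v t) < e)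
         sequentially"
    using pc_convergesE[OF assms(1)] by blast
  obtain r where r: "r > 0" "ball x r \<subseteq> K"
    using assms(6) by (meson open_contains_ball open_interior interior_subset subset_trans)
  define t where "t = max t0 ((norm x + r) * norm v)"
  have t: "t \<ge> t0" by (simp add: t_def)
  have r2: "r/2 > 0" using r(1) by simp
  show ?thesis using conv[OF t r2]
  proof eventually_elim
    case (elim j)
    show "x \<in> Ks j"
    proof (rule ccontr)
      assume x: "x \<notin> Ks j"
      have "Ks j \<noteq> {}" using neKs[OF t] by blast
      then obtain z where dz: "dist x z = r/2" and far: "\<And>y. y \<in> Ks j \<Longrightarrow> r/2 < dist z y"
        using exists_point_far_from_closed_convex[OF assms(4,5) _ x less_imp_le[OF r2]] by blast
      have "norm z \<le> norm x + r"
        using dz r(1) norm_triangle_ineq2[of z x] by (simp add: dist_norm norm_minus_commute)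
      then have "z \<bullet> v \<le> (norm x + r) * norm v"
        using norm_cauchy_schwarz[of z v] mult_right_mono[OF _ norm_ge_zero[of v]] order_trans by blast
      moreover have "z \<in> ball x r" using dz r(1) by simp
      ultimately have z: "z \<in> K \<inter> lower_part C v t"
        using assms(3) r(2) unfolding lower_part_def t_def by auto
      have "r/2 \<le> infdist z (Ks j \<inter> lower_part C v t)"
        using neKs[OF t] far by (intro infdist_geI) (auto intro: less_imp_le)
      also have "\<dots> \<le> hausdorff_dist (Ks j \<inter> lower_part C v t) (K \<inter> lower_part C v t)"
        using assms(2) neKs[OF t] z
        by (subst hausdorff_dist_commute, intro infdist_le_hausdorff_dist) (auto intro: bounded_subset)
      finally show False using elim by simp
    qed
  qed
qed

lemma pc_converges_indicator_tendsto:
  assumes "pc_converges C v Ks K" "\<And>t. bounded (lower_part C v t)"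
    and "\<And>j. Ks j \<subseteq> C" "\<And>j. closed (Ks j)" "\<And>j. convex (Ks j)" "K \<subseteq> C" "closed K"
    and "x \<notin> frontier K"
  shows "(\<lambda>j. indicator (Ks j) x :: real) \<longlonglongrightarrow> indicator K x"
proof (cases "x \<in> K")
  case True
  then have "x \<in> interior K" using assms(7,8) by (simp add: frontier_def)
  then have "eventually (\<lambda>j. x \<in> Ks j) sequentially"
    using assms by (intro pc_converges_eventually_in) auto
  then show ?thesis using True by (simp add: tendsto_eventually eventually_mono)
next
  case False
  then have "eventually (\<lambda>j. x \<notin> Ks j) sequentially"
    using assms by (intro pc_converges_eventually_notin) auto
  then show ?thesis using False by (simp add: tendsto_eventually eventually_mono)
qed

lemma (in finite_measure) measure_tendsto_if_AE_indicator_tendsto: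
  assumes "\<And>j. A j \<in> sets M" "B \<in> sets M"
    and "AE x in M. (\<lambda>j. indicator (A j) x :: real) \<longlonglongrightarrow> indicator B x"
  shows "(\<lambda>j. measure M (A j)) \<longlonglongrightarrow> measure M B"
proof -
  have "(\<lambda>j. integral\<^sup>L M (indicator (A j))) \<longlonglongrightarrow> integral\<^sup>L M (indicator B :: _ \<Rightarrow> real)"
    using assms by (intro integral_dominated_convergence[where w = "\<lambda>_. 1"])
      (auto simp: indicator_def)
  then show ?thesis using assms by (simp add: Int_absorb2 sets.sets_into_space)
qed

lemma sets_gaussian [simp, measurable_cong]: "sets gaussian = sets borel"
  by (simp add: gaussian_def)

lemma space_gaussian [simp]: "space gaussian = UNIV"
  by (simp add: gaussian_def)

lemma nn_integral_gaussian_kernel_finite: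
  "(\<integral>\<^sup>+y. ennreal (exp (- y\<^sup>2 / 2)) \<partial>lborel) < \<infinity>"
proof -
  have "integrable lborel (\<lambda>y. sqrt (2 * pi) * std_normal_density y)"
    using integrable_std_normal_moment[of 0] by simp
  moreover have "(\<lambda>y. sqrt (2 * pi) * std_normal_density y) = (\<lambda>y. exp (- y\<^sup>2 / 2))"
    by (simp add: std_normal_density_def fun_eq_iff)
  ultimately show ?thesis by (simp add: integrable_iff_bounded)
qed

lemma finite_measure_gaussian: "finite_measure (gaussian :: 'a::euclidean_space measure)"
proof
  define c :: real where "c = (2 * pi) powr (- real DIM('a) / 2)"
  have split: "ennreal (c * exp (- (norm x)\<^sup>2 / 2))
      = ennreal c * (\<Prod>b\<in>Basis. ennreal (exp (- (x \<bullet> b)\<^sup>2 / 2)))" for x :: 'a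
  proof -
    have "(norm x)\<^sup>2 = (\<Sum>b\<in>Basis. (x \<bullet> b)\<^sup>2)"
      using euclidean_inner[of x x] by (simp add: power2_norm_eq_inner[symmetric] power2_eq_square)
    then have "exp (- (norm x)\<^sup>2 / 2) = (\<Prod>b\<in>Basis. exp (- (x \<bullet> b)\<^sup>2 / 2))"
      by (simp add: exp_sum[symmetric] sum_negf sum_divide_distrib)
    then show ?thesis by (simp add: c_def ennreal_mult prod_nonneg prod_ennreal)
  qed
  have "emeasure (gaussian :: 'a measure) (space gaussian)
      = (\<integral>\<^sup>+x. ennreal (c * exp (- (norm x)\<^sup>2 / 2)) \<partial>(lborel :: 'a measure))"
    unfolding gaussian_def c_def by (simp add: emeasure_density)
  also have "\<dots> = ennreal c *
      (\<integral>\<^sup>+x. (\<Prod>b\<in>Basis. ennreal (exp (- (x \<bullet> b)\<^sup>2 / 2))) \<partial>(lborel :: 'a measure))"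
    unfolding split by (rule nn_integral_cmult) measurable
  also have "\<dots> = ennreal c * (\<Prod>b\<in>(Basis :: 'a set). \<integral>\<^sup>+y. ennreal (exp (- y\<^sup>2 / 2)) \<partial>lborel)"
    by (subst nn_integral_lborel_prod) auto
  also have "\<dots> < \<infinity>"
    using nn_integral_gaussian_kernel_finite
    by (simp add: ennreal_mult_less_top power_less_top_ennreal)
  finally show "emeasure (gaussian :: 'a measure) (space gaussian) \<noteq> \<infinity>" by simp
qed

lemma AE_gaussian_if_AE_lborel:
  assumes "AE x in lborel. P x"
  shows "AE x in (gaussian :: 'a::euclidean_space measure). P x"
proof -
  have "AE x in lborel. 0 < (2 * pi) powr (- real DIM('a) / 2) * exp (- (norm x)\<^sup>2 / 2)
      \<longrightarrow> P (x :: 'a)"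
    using assms by eventually_elim simp
  then show ?thesis unfolding gaussian_def by (subst AE_density) auto
qed

lemma AE_lborel_notin_frontier_convex:
  fixes K :: "'a::euclidean_space set"
  assumes "convex K"
  shows "AE x in lborel. x \<notin> frontier K"
proof (rule AE_not_in)
  have "frontier K \<in> null_sets lebesgue"
    using negligible_convex_frontier[OF assms] by (simp add: negligible_iff_null_sets)
  then show "frontier K \<in> null_sets lborel"
    by (simp add: null_sets_completion_iff)
qed

theorem lemma3p8:
  fixes C :: "'a::euclidean_space set" and v :: 'a
    and Ks :: "nat \<Rightarrow> 'a set" and K :: "'a set"
  assumes "full_closed_convex_pointed_cone C"
    and "norm v = 1" and "v \<in> interior C" and "v \<in> interior (uminus ` polar_cone C)"
    and "\<And>j. C_pseudo_cone C (Ks j)" and "C_pseudo_cone C K"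
    and "pc_converges C v Ks K"
  shows "(\<lambda>j. measure gaussian (Ks j)) \<longlonglongrightarrow> measure gaussian K"
proof -
  have bounded: "\<And>t. bounded (lower_part C v t)"
    using assms(4) by (rule bounded_lower_part)
  have Ks: "\<And>j. Ks j \<subseteq> C \<and> closed (Ks j) \<and> convex (Ks j)"
    using assms(5) C_pseudo_cone_subset[OF assms(5)]
    unfolding C_pseudo_cone_def pseudo_cone_def by blast
  have K: "K \<subseteq> C" "closed K" "convex K"
    using assms(6) C_pseudo_cone_subset[OF assms(6)]
    unfolding C_pseudo_cone_def pseudo_cone_def by blast+
  have "AE x in gaussian. (\<lambda>j. indicator (Ks j) x :: real) \<longlonglongrightarrow> indicator K x"
    using AE_lborel_notin_frontier_convex[OF K(3)]
      pc_converges_indicator_tendsto[OF assms(7) bounded _ _ _ K(1,2)] Ks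
    by (intro AE_gaussian_if_AE_lborel) (auto elim: AE_mp)
  then show ?thesis
    using Ks K
    by (intro finite_measure.measure_tendsto_if_AE_indicator_tendsto[OF finite_measure_gaussian])
      (auto intro: borel_closed)
qed

end
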